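(* Let $A$ and $B$ be rings, $f: A\to B$ a ring homomorphism and $J$ a proper ideal of $B$. Then: (1) If $A\bowtie^{f}J$ is an Armendariz ring, then $A$ is an Armendariz ring. (2) If $A$ and $f(A)+J$ are Armendariz rings, then $A\bowtie^{f}J$ is an Armendariz ring.
   Context: All rings are associative with identity (not necessarily commutative), ring homomorphisms are unital, and ideals are two-sided. For a ring homomorphism $f:A\to B$ and an ideal $J$ of $B$, the amalgamation of $A$ with $B$ along $J$ with respect to $f$ is the subring $A\bowtie^{f}J=\{(a,f(a)+j)\mid a\in A,\ j\in J\}$ of $A\times B$; $f(A)+J=\{f(a)+j: a\in A, j\in J\}$ is a subring of $B$. A ring $R$ is Armendariz if whenever $p(x)=\sum_{i=0}^n a_ix^i$ and $q(x)=\sum_{j=0}^m b_jx^j$ in $R[x]$ satisfy $p(x)q(x)=0$, then $a_ib_j=0$ for all $i,j$. *)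

theory Defs
  imports "HOL-Algebra.Algebra"
begin

text \<open>Polynomials are those of the
  HOL-Algebra univariate polynomial ring UP R (valid for non-commutative R).\<close>
definition armendariz :: "('a, 'm) ring_scheme \<Rightarrow> bool" where
  "armendariz R \<longleftrightarrow>
     (\<forall>p \<in> carrier (UP R). \<forall>q \<in> carrier (UP R).
        p \<otimes>\<^bsub>UP R\<^esub> q = \<zero>\<^bsub>UP R\<^esub> \<longrightarrow>
        (\<forall>i j. coeff (UP R) p i \<otimes>\<^bsub>R\<^esub> coeff (UP R) q j = \<zero>\<^bsub>R\<^esub>))"

definition amalgamation ::
  "('a, 'm) ring_scheme \<Rightarrow> ('b, 'n) ring_scheme \<Rightarrow> ('a \<Rightarrow> 'b) \<Rightarrow> 'b set \<Rightarrow> ('a \<times> 'b) ring" where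
  "amalgamation A B f J =
     (RDirProd A B) \<lparr> carrier := {(a, f a \<oplus>\<^bsub>B\<^esub> j) | a j. a \<in> carrier A \<and> j \<in> J} \<rparr>"

definition image_plus_ideal ::
  "('a, 'm) ring_scheme \<Rightarrow> ('b, 'n) ring_scheme \<Rightarrow> ('a \<Rightarrow> 'b) \<Rightarrow> 'b set \<Rightarrow> ('b, 'n) ring_scheme" where
  "image_plus_ideal A B f J =
     B \<lparr> carrier := {f a \<oplus>\<^bsub>B\<^esub> j | a j. a \<in> carrier A \<and> j \<in> J} \<rparr>"

end

theory Submission imports Defs begin

text \<open>Applying a ring homomorphism to all coefficients of a polynomial is multiplicative, so the
  Armendariz property pulls back along any family of homomorphisms that jointly separate elements
  from zero. The diagonal \<open>a \<mapsto> (a, f a)\<close> embeds \<open>A\<close> into \<open>A \<bowtie>\<^sup>f J\<close>, which gives (1);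
  the projections to \<open>A\<close> and to \<open>f(A) + J\<close> jointly separate the elements of \<open>A \<bowtie>\<^sup>f J\<close>, which
  gives (2).\<close>

lemma coeff_UP: "p \<in> carrier (UP R) \<Longrightarrow> coeff (UP R) p = p"
  by (simp add: UP_def)

lemma UP_carrier_coeff_closed:
  "p \<in> carrier (UP R) \<Longrightarrow> p n \<in> carrier R"
  by (auto simp: UP_def up_def)

lemma (in ring_hom_ring) UP_map_closed:
  assumes "p \<in> carrier (UP R)"
  shows "h \<circ> p \<in> carrier (UP S)"
proof -
  from assms obtain n where "bound \<zero>\<^bsub>R\<^esub> n p" by (auto simp: UP_def)
  then have "bound \<zero>\<^bsub>S\<^esub> n (h \<circ> p)" by (auto simp: bound_def)
  with assms show ?thesis by (auto simp: UP_def up_def Pi_def)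
qed

lemma (in ring_hom_ring) UP_map_mult:
  assumes p: "p \<in> carrier (UP R)" and q: "q \<in> carrier (UP R)"
  shows "(h \<circ> p) \<otimes>\<^bsub>UP S\<^esub> (h \<circ> q) = h \<circ> (p \<otimes>\<^bsub>UP R\<^esub> q)"
proof -
  interpret UR: UP_ring R "UP R" by unfold_locales
  interpret US: UP_ring S "UP S" by unfold_locales
  have hp: "h \<circ> p \<in> carrier (UP S)" and hq: "h \<circ> q \<in> carrier (UP S)"
    and hpq: "h \<circ> (p \<otimes>\<^bsub>UP R\<^esub> q) \<in> carrier (UP S)"
    using p q by (simp_all add: UP_map_closed)
  \<comment> \<open>Inside ring locales plain \<open>coeff\<close> denotes the coefficients of list polynomials.\<close>
  show ?thesis
  proof (rule US.up_eqI[OF _ US.UP_mult_closed[OF hp hq] hpq])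
    fix n
    have "up_ring.coeff (UP S) ((h \<circ> p) \<otimes>\<^bsub>UP S\<^esub> (h \<circ> q)) n
        = (\<Oplus>\<^bsub>S\<^esub>i \<in> {..n}. h (p i) \<otimes>\<^bsub>S\<^esub> h (q (n - i)))"
      unfolding US.coeff_mult[OF hp hq] coeff_UP[OF hp] coeff_UP[OF hq] by simp
    also have "\<dots> = h (\<Oplus>i \<in> {..n}. p i \<otimes> q (n - i))"
      using p q by (simp add: UP_carrier_coeff_closed Pi_def comp_def)
    also have "\<dots> = h (up_ring.coeff (UP R) (p \<otimes>\<^bsub>UP R\<^esub> q) n)"
      unfolding UR.coeff_mult[OF p q] coeff_UP[OF p] coeff_UP[OF q] ..
    also have "\<dots> = up_ring.coeff (UP S) (h \<circ> (p \<otimes>\<^bsub>UP R\<^esub> q)) n"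
      by (simp add: coeff_UP[OF hpq] coeff_UP[OF UR.UP_mult_closed[OF p q]])
    finally show "up_ring.coeff (UP S) ((h \<circ> p) \<otimes>\<^bsub>UP S\<^esub> (h \<circ> q)) n
        = up_ring.coeff (UP S) (h \<circ> (p \<otimes>\<^bsub>UP R\<^esub> q)) n" .
  qed
qed

lemma (in ring_hom_ring) armendariz_hom_coeff_mult_eq_zero:
  assumes arm: "armendariz S"
    and p: "p \<in> carrier (UP R)" and q: "q \<in> carrier (UP R)"
    and pq: "p \<otimes>\<^bsub>UP R\<^esub> q = \<zero>\<^bsub>UP R\<^esub>"
  shows "h (p i \<otimes>\<^bsub>R\<^esub> q j) = \<zero>\<^bsub>S\<^esub>"
proof -
  have hp: "h \<circ> p \<in> carrier (UP S)" and hq: "h \<circ> q \<in> carrier (UP S)"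
    using p q by (simp_all add: UP_map_closed)
  have "(h \<circ> p) \<otimes>\<^bsub>UP S\<^esub> (h \<circ> q) = \<zero>\<^bsub>UP S\<^esub>"
    using UP_map_mult[OF p q] pq by (simp add: UP_def comp_def)
  with arm hp hq
  have "up_ring.coeff (UP S) (h \<circ> p) i \<otimes>\<^bsub>S\<^esub> up_ring.coeff (UP S) (h \<circ> q) j = \<zero>\<^bsub>S\<^esub>"
    unfolding armendariz_def by blast
  with p q show ?thesis
    by (simp add: coeff_UP[OF hp] coeff_UP[OF hq] UP_carrier_coeff_closed)
qed

lemma armendariz_if_separating_homs:
  assumes R: "ring R" and S: "ring S" and T: "ring T"
    and g: "g \<in> ring_hom R S" and h: "h \<in> ring_hom R T"
    and "armendariz S" and "armendariz T"
    and separating: "\<And>x. \<lbrakk>x \<in> carrier R; g x = \<zero>\<^bsub>S\<^esub>; h x = \<zero>\<^bsub>T\<^esub>\<rbrakk> \<Longrightarrow> x = \<zero>\<^bsub>R\<^esub>"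
  shows "armendariz R"
  unfolding armendariz_def
proof (intro ballI impI allI)
  fix p q i j
  assume p: "p \<in> carrier (UP R)" and q: "q \<in> carrier (UP R)"
    and pq: "p \<otimes>\<^bsub>UP R\<^esub> q = \<zero>\<^bsub>UP R\<^esub>"
  interpret G: ring_hom_ring R S g using ring_hom_ringI2[OF R S g] .
  interpret H: ring_hom_ring R T h using ring_hom_ringI2[OF R T h] .
  have "p i \<otimes>\<^bsub>R\<^esub> q j = \<zero>\<^bsub>R\<^esub>"
    using p q by (intro separating G.armendariz_hom_coeff_mult_eq_zero
        H.armendariz_hom_coeff_mult_eq_zero) (simp_all add: assms pq UP_carrier_coeff_closed)
  then show "coeff (UP R) p i \<otimes>\<^bsub>R\<^esub> coeff (UP R) q j = \<zero>\<^bsub>R\<^esub>"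
    using p q by (simp add: coeff_UP)
qed

lemma armendariz_if_injective_hom:
  assumes R: "ring R" and S: "ring S" and h: "h \<in> ring_hom R S"
    and "armendariz S" and "inj_on h (carrier R)"
  shows "armendariz R"
proof (rule armendariz_if_separating_homs[OF R S S h h])
  interpret H: ring_hom_ring R S h using ring_hom_ringI2[OF R S h] .
  show "x = \<zero>\<^bsub>R\<^esub>" if "x \<in> carrier R" "h x = \<zero>\<^bsub>S\<^esub>" for x
    using that assms(5) H.hom_zero ring.ring_simprules(2)[OF R] by (metis inj_onD)
qed (use assms in auto)

lemma RDirProd_simps:
  "\<one>\<^bsub>RDirProd R S\<^esub> = (\<one>\<^bsub>R\<^esub>, \<one>\<^bsub>S\<^esub>)"
  "\<zero>\<^bsub>RDirProd R S\<^esub> = (\<zero>\<^bsub>R\<^esub>, \<zero>\<^bsub>S\<^esub>)"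
  "(a, b) \<otimes>\<^bsub>RDirProd R S\<^esub> (c, d) = (a \<otimes>\<^bsub>R\<^esub> c, b \<otimes>\<^bsub>S\<^esub> d)"
  "(a, b) \<oplus>\<^bsub>RDirProd R S\<^esub> (c, d) = (a \<oplus>\<^bsub>R\<^esub> c, b \<oplus>\<^bsub>S\<^esub> d)"
  by (auto simp add: RDirProd_def DirProd_def monoid.defs)

lemma RDirProd_a_inv:
  assumes "ring R" "ring S" "a \<in> carrier R" "b \<in> carrier S"
  shows "\<ominus>\<^bsub>RDirProd R S\<^esub> (a, b) = (\<ominus>\<^bsub>R\<^esub> a, \<ominus>\<^bsub>S\<^esub> b)"
proof -
  interpret P: ring "RDirProd R S" using RDirProd_ring assms by blast
  interpret R: ring R by fact
  interpret S: ring S by fact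
  show ?thesis
    by (rule P.minus_equality)
       (use assms in \<open>auto simp: RDirProd_simps RDirProd_carrier R.l_neg S.l_neg\<close>)
qed

context
  fixes A :: "('a, 'm) ring_scheme" and B :: "('b, 'n) ring_scheme"
    and f :: "'a \<Rightarrow> 'b" and J :: "'b set"
  assumes A: "ring A" and B: "ring B" and f: "f \<in> ring_hom A B" and J: "ideal J B"
begin

interpretation A: ring A by (rule A)
interpretation B: ring B by (rule B)
interpretation J: ideal J B by (rule J)
interpretation f: ring_hom_ring A B f using ring_hom_ringI2[OF A B f] .
interpretation P: ring "RDirProd A B" using RDirProd_ring[OF A B] .

lemma amalgamation_carrier:
  "carrier (amalgamation A B f J) = {(a, f a \<oplus>\<^bsub>B\<^esub> j) | a j. a \<in> carrier A \<and> j \<in> J}"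
  by (simp add: amalgamation_def)

lemma image_plus_ideal_carrier:
  "carrier (image_plus_ideal A B f J) = snd ` carrier (amalgamation A B f J)"
  by (force simp: image_plus_ideal_def amalgamation_carrier)

lemma amalgamation_memE:
  assumes "x \<in> carrier (amalgamation A B f J)"
  obtains a j where "x = (a, f a \<oplus>\<^bsub>B\<^esub> j)" "a \<in> carrier A" "j \<in> J" "j \<in> carrier B"
  using assms J.a_subset by (auto simp: amalgamation_carrier)

lemma amalgamation_memI:
  "\<lbrakk>a \<in> carrier A; j \<in> J\<rbrakk> \<Longrightarrow> (a, f a \<oplus>\<^bsub>B\<^esub> j) \<in> carrier (amalgamation A B f J)"
  by (auto simp: amalgamation_carrier)

lemma amalgamation_subring:
  "subring (carrier (amalgamation A B f J)) (RDirProd A B)"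
proof (rule P.subringI)
  show "carrier (amalgamation A B f J) \<subseteq> carrier (RDirProd A B)"
    by (auto simp: RDirProd_carrier elim!: amalgamation_memE)
  show "\<one>\<^bsub>RDirProd A B\<^esub> \<in> carrier (amalgamation A B f J)"
    using amalgamation_memI[OF A.one_closed J.zero_closed] by (simp add: RDirProd_simps)
next
  fix x assume "x \<in> carrier (amalgamation A B f J)"
  then obtain a j where x: "x = (a, f a \<oplus>\<^bsub>B\<^esub> j)" "a \<in> carrier A" "j \<in> J" "j \<in> carrier B"
    by (rule amalgamation_memE)
  then have "\<ominus>\<^bsub>RDirProd A B\<^esub> x = (\<ominus>\<^bsub>A\<^esub> a, f (\<ominus>\<^bsub>A\<^esub> a) \<oplus>\<^bsub>B\<^esub> \<ominus>\<^bsub>B\<^esub> j)"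
    by (simp add: RDirProd_a_inv[OF A B] B.minus_add)
  also have "\<dots> \<in> carrier (amalgamation A B f J)"
    using x by (intro amalgamation_memI) auto
  finally show "\<ominus>\<^bsub>RDirProd A B\<^esub> x \<in> carrier (amalgamation A B f J)" .
next
  fix x y assume "x \<in> carrier (amalgamation A B f J)" "y \<in> carrier (amalgamation A B f J)"
  then obtain a j a' j' where
    x: "x = (a, f a \<oplus>\<^bsub>B\<^esub> j)" "a \<in> carrier A" "j \<in> J" "j \<in> carrier B" and
    y: "y = (a', f a' \<oplus>\<^bsub>B\<^esub> j')" "a' \<in> carrier A" "j' \<in> J" "j' \<in> carrier B"
    by (metis amalgamation_memE)
  define k where "k = (f a \<otimes>\<^bsub>B\<^esub> j' \<oplus>\<^bsub>B\<^esub> j \<otimes>\<^bsub>B\<^esub> f a') \<oplus>\<^bsub>B\<^esub> j \<otimes>\<^bsub>B\<^esub> j'"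
  have "x \<otimes>\<^bsub>RDirProd A B\<^esub> y = (a \<otimes>\<^bsub>A\<^esub> a', f (a \<otimes>\<^bsub>A\<^esub> a') \<oplus>\<^bsub>B\<^esub> k)"
    using x y by (simp add: k_def RDirProd_simps B.l_distr B.r_distr B.a_ac)
  also have "\<dots> \<in> carrier (amalgamation A B f J)"
    using x y unfolding k_def by (intro amalgamation_memI J.a_closed J.I_l_closed J.I_r_closed) auto
  finally show "x \<otimes>\<^bsub>RDirProd A B\<^esub> y \<in> carrier (amalgamation A B f J)" .
  have "x \<oplus>\<^bsub>RDirProd A B\<^esub> y = (a \<oplus>\<^bsub>A\<^esub> a', f (a \<oplus>\<^bsub>A\<^esub> a') \<oplus>\<^bsub>B\<^esub> (j \<oplus>\<^bsub>B\<^esub> j'))"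
    using x y by (simp add: RDirProd_simps B.a_ac)
  also have "\<dots> \<in> carrier (amalgamation A B f J)"
    using x y by (intro amalgamation_memI J.a_closed) auto
  finally show "x \<oplus>\<^bsub>RDirProd A B\<^esub> y \<in> carrier (amalgamation A B f J)" .
qed

lemma ring_amalgamation: "ring (amalgamation A B f J)"
  unfolding amalgamation_def
  using P.subring_is_ring[OF amalgamation_subring] by (simp add: amalgamation_carrier)

lemma snd_RDirProd_ring_hom: "snd \<in> ring_hom (RDirProd A B) B"
  by (auto simp: ring_hom_def RDirProd_carrier RDirProd_simps)

lemma ring_image_plus_ideal: "ring (image_plus_ideal A B f J)"
proof -
  interpret snd: ring_hom_ring "RDirProd A B" B snd
    using ring_hom_ringI2[OF P.ring_axioms B snd_RDirProd_ring_hom] .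
  have "subring (carrier (image_plus_ideal A B f J)) B"
    unfolding image_plus_ideal_carrier by (rule snd.img_is_subring[OF amalgamation_subring])
  then show ?thesis
    unfolding image_plus_ideal_def using B.subring_is_ring by simp
qed

lemma amalgamation_zero: "\<zero>\<^bsub>amalgamation A B f J\<^esub> = (\<zero>\<^bsub>A\<^esub>, \<zero>\<^bsub>B\<^esub>)"
  by (simp add: amalgamation_def RDirProd_simps)

lemma amalgamation_diagonal_hom: "(\<lambda>a. (a, f a)) \<in> ring_hom A (amalgamation A B f J)"
  using amalgamation_memI[OF _ J.zero_closed]
  by (auto simp: ring_hom_def amalgamation_def RDirProd_simps)

lemma amalgamation_fst_hom: "fst \<in> ring_hom (amalgamation A B f J) A"
  by (auto simp: ring_hom_def amalgamation_def RDirProd_simps elim!: amalgamation_memE)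

lemma amalgamation_snd_hom: "snd \<in> ring_hom (amalgamation A B f J) (image_plus_ideal A B f J)"
proof -
  have "snd x \<in> carrier (image_plus_ideal A B f J)" if "x \<in> carrier (amalgamation A B f J)" for x
    using that by (simp add: image_plus_ideal_carrier)
  then show ?thesis
    by (auto simp: ring_hom_def amalgamation_def image_plus_ideal_def RDirProd_simps)
qed

lemma armendariz_of_armendariz_amalgamation:
  "armendariz (amalgamation A B f J) \<Longrightarrow> armendariz A"
  by (rule armendariz_if_injective_hom[OF A ring_amalgamation amalgamation_diagonal_hom])
     (auto simp: inj_on_def)

lemma armendariz_amalgamation:
  assumes "armendariz A" and "armendariz (image_plus_ideal A B f J)"
  shows "armendariz (amalgamation A B f J)"
proof (rule armendariz_if_separating_homs[OF ring_amalgamation A ring_image_plus_ideal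
      amalgamation_fst_hom amalgamation_snd_hom assms])
  show "x = \<zero>\<^bsub>amalgamation A B f J\<^esub>"
    if "fst x = \<zero>\<^bsub>A\<^esub>" and "snd x = \<zero>\<^bsub>image_plus_ideal A B f J\<^esub>" for x
    using that by (simp add: amalgamation_zero image_plus_ideal_def prod_eq_iff)
qed

end

theorem theorem2p2:
  fixes A :: "('a, 'm) ring_scheme" and B :: "('b, 'n) ring_scheme"
    and f :: "'a \<Rightarrow> 'b" and J :: "'b set"
  assumes "ring A" and "ring B" and "f \<in> ring_hom A B"
    and "ideal J B" and "J \<noteq> carrier B"
  shows "(armendariz (amalgamation A B f J) \<longrightarrow> armendariz A)
       \<and> (armendariz A \<and> armendariz (image_plus_ideal A B f J)
            \<longrightarrow> armendariz (amalgamation A B f J))"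
  using armendariz_of_armendariz_amalgamation[OF assms(1-4)]
    armendariz_amalgamation[OF assms(1-4)]
  by blast

end
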